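(* Let $\mathcal V\subset(\mathbb{R}\cup\{-\infty\})^n$ be a finite set of vectors, none identically $-\infty$, such that for each $l\in[n]$ there is $v\in\mathcal V$ with $v_l\neq-\infty$, and let $\mathcal V=\bigcup_{i\in[n]}\mathcal V_i$ be a partition into nonempty sets. For $i\in[n]$ define $T^{\mathrm{ty},i}$ by $$T^{\mathrm{ty},i}_l(x)=\begin{cases}\inf_{v\in\mathcal V_i,\,v_i\neq-\infty}\{-v_i+\max_{j\neq i}(v_j+x_j)\}, & l=i,\\ \inf_{v\in\mathcal V_i,\,v_l\neq-\infty}\{-v_l+v_i\}+x_i, & l\neq i,\end{cases}$$ and let $T^{\mathrm{ty}}_l(x)=\min_{i\in[n]}T^{\mathrm{ty},i}_l(x)$. Then $$\min_{a}\max_{i\in[n]}\operatorname{dist}_H(\mathcal V_i,\mathcal H^i_a)=-\rho(T^{\mathrm{ty}}),$$ where the minimum is over $a\in(\mathbb{R}\cup\{-\infty\})^n$ not identically $-\infty$, and the minimum is achieved by any such $a$ with $T^{\mathrm{ty}}(a)\ge\rho(T^{\mathrm{ty}})+a$.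
   Context: $-\infty+c=-\infty$, $\max\emptyset=-\infty$, $\inf\emptyset=+\infty$. For $i\in[n]$, $\mathcal H^i_a=\{y\in(\mathbb{R}\cup\{-\infty\})^n: a_i+y_i=\max_{j\neq i}(a_j+y_j)\}$. Hilbert's projective metric $d(x,y)=\inf\{\lambda-\mu:\lambda,\mu\in\mathbb{R},\ \mu+y_l\le x_l\le\lambda+y_l\ \forall l\}\in[0,+\infty]$; $\operatorname{dist}_H(A,B)=\sup_{x\in A}\inf_{y\in B}d(x,y)$. $\rho(T)=\sup\{\lambda\in\mathbb{R}\cup\{-\infty\}:\exists u\not\equiv-\infty,\ T(u)=\lambda+u\}$. *)

theory Defs
  imports "HOL-Analysis.Analysis" "HOL-Library.Extended_Real"
begin

text \<open>Vectors in (R \<union> {-\<infinity>})^n, with index set the finite type 'n.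
  We use ereal and require that no coordinate is +\<infinity>.\<close>

definition tvec :: "('n \<Rightarrow> ereal) \<Rightarrow> bool" where
  "tvec x \<longleftrightarrow> (\<forall>l. x l \<noteq> \<infinity>)"

definition allneg :: "'n \<Rightarrow> ereal" where
  "allneg = (\<lambda>_. - \<infinity>)"

definition hyp :: "'n \<Rightarrow> ('n \<Rightarrow> ereal) \<Rightarrow> ('n \<Rightarrow> ereal) set" where
  "hyp i a = {y. tvec y \<and> a i + y i = Sup {a j + y j | j. j \<noteq> i}}"

text \<open>Hilbert's projective metric (Inf of empty set = +\<infinity>).\<close>
definition hilbert_d :: "('n \<Rightarrow> ereal) \<Rightarrow> ('n \<Rightarrow> ereal) \<Rightarrow> ereal" where
  "hilbert_d x y = Inf {ereal (lam - mu) | lam mu.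
      \<forall>l. ereal mu + y l \<le> x l \<and> x l \<le> ereal lam + y l}"

definition distH :: "('n \<Rightarrow> ereal) set \<Rightarrow> ('n \<Rightarrow> ereal) set \<Rightarrow> ereal" where
  "distH A B = (SUP x\<in>A. INF y\<in>B. hilbert_d x y)"

definition spec_rad :: "(('n \<Rightarrow> ereal) \<Rightarrow> ('n \<Rightarrow> ereal)) \<Rightarrow> ereal" where
  "spec_rad T = Sup {lam. lam \<noteq> \<infinity> \<and>
      (\<exists>u. tvec u \<and> u \<noteq> allneg \<and> T u = (\<lambda>l. lam + u l))}"

definition Tty_i :: "('n \<Rightarrow> ('n \<Rightarrow> ereal) set) \<Rightarrow> 'n \<Rightarrow> ('n \<Rightarrow> ereal) \<Rightarrow> ('n \<Rightarrow> ereal)" where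
  "Tty_i V i x = (\<lambda>l.
     if l = i then
       Inf {- v i + Sup {v j + x j | j. j \<noteq> i} | v. v \<in> V i \<and> v i \<noteq> - \<infinity>}
     else
       Inf {- v l + v i | v. v \<in> V i \<and> v l \<noteq> - \<infinity>} + x i)"

definition Tty :: "('n \<Rightarrow> ('n \<Rightarrow> ereal) set) \<Rightarrow> ('n \<Rightarrow> ereal) \<Rightarrow> ('n \<Rightarrow> ereal)" where
  "Tty V x = (\<lambda>l. INF i. Tty_i V i x l)"

end

theory Submission
  imports Defs
begin

text \<open>In the coordinates \<open>y = exp x\<close> the operator \<open>T\<^sup>t\<^sup>y\<close> becomes a continuous, monotone and
  positively homogeneous self-map of the nonnegative orthant. A Perron--Frobenius argument
  (Brouwer's theorem for a perturbed, normalised map, then a compactness limit) gives it a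
  nonnegative eigenvector whose eigenvalue bounds every subeigenvalue (Collatz--Wielandt). Back in
  log coordinates this eigenvalue is \<open>\<rho>(T\<^sup>t\<^sup>y)\<close>, and it is attained by an eigenvector.

  On the other side, for \<open>d \<ge> 0\<close> a point \<open>v\<close> lies within Hilbert distance \<open>d\<close> of \<open>H\<^sup>i\<^sub>a\<close>
  exactly when the \<open>i\<close>-th entry of \<open>a + v\<close> is within \<open>d\<close> of the maximum of its other entries, and
  these conditions for all \<open>v \<in> V\<^sub>i\<close> say precisely that \<open>-d + a \<le> T\<^sup>t\<^sup>y\<^sup>,\<^sup>i(a)\<close>. Hence
  \<open>max\<^sub>i dist\<^sub>H(V\<^sub>i, H\<^sup>i\<^sub>a) \<le> d\<close> iff \<open>-d\<close> is a subeigenvalue of \<open>T\<^sup>t\<^sup>y\<close> at \<open>a\<close>. This yields the lower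
  bound \<open>-\<rho>(T\<^sup>t\<^sup>y)\<close>, equality whenever \<open>\<rho>(T\<^sup>t\<^sup>y) + a \<le> T\<^sup>t\<^sup>y(a)\<close>, and thus attainment at the
  eigenvector.\<close>

lemma continuous_on_Min_image:
  fixes f :: "'k \<Rightarrow> 'a::topological_space \<Rightarrow> real"
  assumes "finite K" "K \<noteq> {}" "\<And>k. k \<in> K \<Longrightarrow> continuous_on S (f k)"
  shows "continuous_on S (\<lambda>y. Min ((\<lambda>k. f k y) ` K))"
  using assms
proof (induction K rule: finite_ne_induct)
  case (insert k K)
  then have "continuous_on S (\<lambda>y. min (f k y) (Min ((\<lambda>k. f k y) ` K)))"
    by (intro continuous_on_min) auto
  then show ?case
    using insert by (simp add: Min_insert)
qed simp

lemma continuous_on_Max_insert_0_image: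
  fixes f :: "'k \<Rightarrow> 'a::topological_space \<Rightarrow> real"
  assumes "finite K" "\<And>k. k \<in> K \<Longrightarrow> continuous_on S (f k)"
  shows "continuous_on S (\<lambda>y. Max (insert 0 ((\<lambda>k. f k y) ` K)))"
  using assms
proof (induction K rule: finite_induct)
  case (insert k K)
  then have "continuous_on S (\<lambda>y. max (f k y) (Max (insert 0 ((\<lambda>k. f k y) ` K))))"
    by (intro continuous_on_max) auto
  moreover have "insert 0 (insert (f k y) A) = insert (f k y) (insert 0 A)" for y A
    by auto
  ultimately show ?case
    using insert by (simp add: Max_insert)
qed simp

lemma Min_image_mono:
  fixes f g :: "'a \<Rightarrow> 'b::linorder"
  assumes "finite K" "K \<noteq> {}" "\<And>k. k \<in> K \<Longrightarrow> f k \<le> g k"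
  shows "(MIN k\<in>K. f k) \<le> (MIN k\<in>K. g k)"
  using assms by (auto simp: Min_le_iff intro: order.trans)

lemma Max_insert_0_image_mono:
  fixes f g :: "'a \<Rightarrow> 'b::{linorder,zero}"
  assumes "finite K" "\<And>k. k \<in> K \<Longrightarrow> f k \<le> g k"
  shows "Max (insert 0 (f ` K)) \<le> Max (insert 0 (g ` K))"
proof -
  have "f k \<le> Max (insert 0 (g ` K))" if "k \<in> K" for k
    using assms that by (auto intro: order.trans[OF _ Max_ge])
  then show ?thesis
    using assms by (subst Max_le_iff) auto
qed

lemma Min_image_mult:
  fixes f :: "'a \<Rightarrow> real"
  assumes "finite K" "K \<noteq> {}" "0 \<le> c"
  shows "(MIN k\<in>K. c * f k) = c * (MIN k\<in>K. f k)"
  using mono_Min_commute[of "(*) c" "f ` K"] assms by (simp add: mono_def mult_left_mono image_image)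

lemma Max_insert_0_image_mult:
  fixes f :: "'a \<Rightarrow> real"
  assumes "finite K" "0 \<le> c"
  shows "Max (insert 0 ((\<lambda>k. c * f k) ` K)) = c * Max (insert 0 (f ` K))"
  using mono_Max_commute[of "(*) c" "insert 0 (f ` K)"] assms
  by (simp add: mono_def mult_left_mono image_image)

section \<open>Perron--Frobenius for monotone homogeneous maps\<close>

definition std_simplex :: "(real^'n::finite) set" where
  "std_simplex = {y. 0 \<le> y \<and> (\<Sum>i\<in>UNIV. y$i) = 1}"

lemma std_simplex_component_le_1: "y \<in> std_simplex \<Longrightarrow> y$i \<le> 1"
  using member_le_sum[of i UNIV "\<lambda>i. y$i"] by (auto simp: std_simplex_def less_eq_vec_def)

lemma compact_std_simplex: "compact std_simplex"
proof -
  have "closed (std_simplex :: (real^'n) set)"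
    unfolding std_simplex_def less_eq_vec_def
    by (intro closed_Collect_conj closed_Collect_all closed_Collect_le closed_Collect_eq
        continuous_intros)
  moreover have "std_simplex \<subseteq> cbox (0::real^'n) 1"
  proof
    fix y :: "real^'n" assume "y \<in> std_simplex"
    then show "y \<in> cbox 0 1"
      using std_simplex_component_le_1 by (auto simp: std_simplex_def mem_box_cart less_eq_vec_def)
  qed
  ultimately show ?thesis
    using bounded_cbox bounded_subset compact_eq_bounded_closed by blast
qed

lemma convex_std_simplex: "convex std_simplex"
  unfolding std_simplex_def convex_def less_eq_vec_def
  by (auto simp: sum.distrib sum_distrib_left[symmetric])

lemma std_simplex_nonempty: "std_simplex \<noteq> {}"
proof -
  have "(\<chi> i. 1 / real CARD('n)) \<in> (std_simplex :: (real^'n) set)"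
    by (simp add: std_simplex_def less_eq_vec_def)
  then show ?thesis by blast
qed

text \<open>The floor \<open>\<delta>\<close> keeps the normalising sum away from \<open>0\<close>, so that Brouwer's
  theorem applies to the normalised map on the simplex.\<close>

lemma perturbed_eigenvector_exists:
  fixes G :: "real^'n::finite \<Rightarrow> real^'n"
  assumes cont: "continuous_on {0..} G" and "0 < \<delta>"
  obtains y \<mu> where "y \<in> std_simplex" "0 < \<mu>" "(\<chi> l. max (G y $ l) \<delta>) = \<mu> *\<^sub>R y"
proof -
  define G\<delta> where "G\<delta> y = (\<chi> l. max (G y $ l) \<delta>)" for y
  define F where "F y = (1 / (\<Sum>l\<in>UNIV. G\<delta> y $ l)) *\<^sub>R G\<delta> y" for y
  have G\<delta>_pos: "0 < G\<delta> y $ l" for y l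
    using \<open>0 < \<delta>\<close> by (simp add: G\<delta>_def)
  then have sum_G\<delta>_pos: "0 < (\<Sum>l\<in>UNIV. G\<delta> y $ l)" for y
    by (simp add: sum_pos)
  have "continuous_on std_simplex G"
    by (rule continuous_on_subset[OF cont]) (auto simp: std_simplex_def)
  then have "continuous_on std_simplex G\<delta>"
    unfolding G\<delta>_def by (intro continuous_on_vec_lambda continuous_intros) auto
  then have "continuous_on std_simplex F"
    unfolding F_def using sum_G\<delta>_pos by (intro continuous_intros) (auto simp: less_le)
  moreover have "F \<in> std_simplex \<rightarrow> std_simplex"
  proof
    fix y :: "real^'n"
    have "0 \<le> F y"
      using G\<delta>_pos sum_G\<delta>_pos[of y] by (simp add: F_def less_eq_vec_def less_imp_le)
    moreover have "(\<Sum>i\<in>UNIV. F y $ i) = 1"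
      using sum_G\<delta>_pos[of y] by (simp add: F_def sum_divide_distrib[symmetric])
    ultimately show "F y \<in> std_simplex" by (simp add: std_simplex_def)
  qed
  ultimately obtain y where y: "y \<in> std_simplex" "F y = y"
    using brouwer[OF compact_std_simplex convex_std_simplex std_simplex_nonempty] by blast
  define \<mu> where "\<mu> = (\<Sum>l\<in>UNIV. G\<delta> y $ l)"
  show thesis
  proof (rule that[OF y(1)])
    show "0 < \<mu>"
      using sum_G\<delta>_pos by (simp add: \<mu>_def)
    then have "G\<delta> y = \<mu> *\<^sub>R F y"
      by (simp add: F_def flip: \<mu>_def)
    then show "(\<chi> l. max (G y $ l) \<delta>) = \<mu> *\<^sub>R y"
      using y(2) by (simp add: G\<delta>_def)
  qed
qed

lemma perturbed_eigenvalue_le: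
  fixes G :: "real^'n::finite \<Rightarrow> real^'n"
  assumes nonneg: "\<And>y. 0 \<le> y \<Longrightarrow> 0 \<le> G y"
    and mono: "\<And>y z. 0 \<le> y \<Longrightarrow> y \<le> z \<Longrightarrow> G y \<le> G z"
    and y: "y \<in> std_simplex" and eig: "(\<chi> l. max (G y $ l) \<delta>) = \<mu> *\<^sub>R y" and "0 \<le> \<delta>"
  shows "\<mu> \<le> (\<Sum>l\<in>UNIV. G 1 $ l + \<delta>)"
proof -
  have "G y \<le> G 1"
    using y std_simplex_component_le_1 by (intro mono) (auto simp: std_simplex_def less_eq_vec_def)
  moreover have "0 \<le> G 1"
    by (rule nonneg) (simp add: less_eq_vec_def)
  ultimately have "max (G y $ l) \<delta> \<le> G 1 $ l + \<delta>" for l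
    using \<open>0 \<le> \<delta>\<close> unfolding less_eq_vec_def zero_index by (smt (verit))
  then have "(\<Sum>l\<in>UNIV. max (G y $ l) \<delta>) \<le> (\<Sum>l\<in>UNIV. G 1 $ l + \<delta>)"
    by (rule sum_mono)
  moreover have "(\<Sum>l\<in>UNIV. max (G y $ l) \<delta>) = \<mu>"
    using arg_cong[OF eig, of "\<lambda>x. \<Sum>l\<in>UNIV. x $ l"] y
    by (simp add: std_simplex_def sum_distrib_left[symmetric])
  ultimately show ?thesis by simp
qed

lemma collatz_wielandt_bound:
  fixes G :: "real^'n::finite \<Rightarrow> real^'n"
  assumes mono: "\<And>y z. 0 \<le> y \<Longrightarrow> y \<le> z \<Longrightarrow> G y \<le> G z"
    and hom: "\<And>c y. 0 < c \<Longrightarrow> 0 \<le> y \<Longrightarrow> G (c *\<^sub>R y) = c *\<^sub>R G y"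
    and y: "\<And>i. 0 < y$i" and "0 \<le> \<mu>" and super: "G y \<le> \<mu> *\<^sub>R y"
    and z: "0 \<le> z" "z \<noteq> 0" and sub: "\<theta> *\<^sub>R z \<le> G z"
  shows "\<theta> \<le> \<mu>"
proof (cases "\<theta> \<le> 0")
  case False
  define c where "c = Max (range (\<lambda>l. z$l / y$l))"
  have "c \<in> range (\<lambda>l. z$l / y$l)"
    unfolding c_def by (rule Max_in) auto
  then obtain l0 where l0: "c = z$l0 / y$l0"
    by blast
  have "z$l / y$l \<le> c" for l
    unfolding c_def by (rule Max_ge) auto
  then have z_le: "z \<le> c *\<^sub>R y"
    using y by (simp add: less_eq_vec_def pos_divide_le_eq)
  obtain l1 where "z$l1 \<noteq> 0"
    using z(2) by (metis vec_eq_iff zero_index)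
  then have "0 < z$l1 / y$l1"
    using z(1) y[of l1] by (auto simp: less_eq_vec_def less_le)
  also have "\<dots> \<le> c"
    by (simp add: c_def)
  finally have "0 < c" .
  have "\<theta> * z$l0 \<le> G z $ l0"
    using sub by (simp add: less_eq_vec_def)
  also have "\<dots> \<le> G (c *\<^sub>R y) $ l0"
    using mono[OF z(1) z_le] by (simp add: less_eq_vec_def)
  also have "\<dots> = c * G y $ l0"
    using hom[OF \<open>0 < c\<close>] y by (simp add: less_eq_vec_def less_imp_le)
  also have "\<dots> \<le> c * (\<mu> * y$l0)"
    using super \<open>0 < c\<close> by (simp add: less_eq_vec_def)
  also have "\<dots> = \<mu> * z$l0"
    using l0 y[of l0] by simp
  finally show ?thesis
    using l0 y[of l0] \<open>0 < c\<close> by (simp add: zero_less_divide_iff)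
qed (use \<open>0 \<le> \<mu>\<close> in simp)

lemma subeigenvalue_le_perturbed_eigenvalue:
  fixes G :: "real^'n::finite \<Rightarrow> real^'n"
  assumes mono: "\<And>y z. 0 \<le> y \<Longrightarrow> y \<le> z \<Longrightarrow> G y \<le> G z"
    and hom: "\<And>c y. 0 < c \<Longrightarrow> 0 \<le> y \<Longrightarrow> G (c *\<^sub>R y) = c *\<^sub>R G y"
    and "0 < \<delta>" "0 < \<mu>" and eig: "(\<chi> l. max (G y $ l) \<delta>) = \<mu> *\<^sub>R y"
    and z: "0 \<le> z" "z \<noteq> 0" "\<theta> *\<^sub>R z \<le> G z"
  shows "\<theta> \<le> \<mu>"
proof (rule collatz_wielandt_bound[where G=G, OF mono hom _ _ _ z])
  have eig_l: "max (G y $ l) \<delta> = \<mu> * y $ l" for l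
    using arg_cong[OF eig, of "\<lambda>x. x $ l"] by simp
  have "0 < max (G y $ l) \<delta>" for l
    using \<open>0 < \<delta>\<close> by (simp add: less_max_iff_disj)
  then have "0 < \<mu> * y $ l" for l
    by (simp only: eig_l)
  then show "0 < y $ l" for l
    using \<open>0 < \<mu>\<close> by (simp add: zero_less_mult_iff)
  show "G y \<le> \<mu> *\<^sub>R y"
    by (simp add: less_eq_vec_def flip: eig_l)
qed (use \<open>0 < \<mu>\<close> in auto)

lemma eigenvector_of_perturbed_limit:
  fixes G :: "real^'n::finite \<Rightarrow> real^'n"
  assumes nonneg: "\<And>y. 0 \<le> y \<Longrightarrow> 0 \<le> G y" and cont: "continuous_on {0..} G"
    and y: "\<And>k. y k \<in> std_simplex" "y \<longlonglongrightarrow> y0" "y0 \<in> std_simplex"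
    and \<mu>: "\<mu> \<longlonglongrightarrow> \<mu>0" and \<delta>: "\<delta> \<longlonglongrightarrow> 0"
    and eig: "\<And>k. (\<chi> l. max (G (y k) $ l) (\<delta> k)) = \<mu> k *\<^sub>R y k"
  shows "G y0 = \<mu>0 *\<^sub>R y0"
proof -
  have "y0 \<in> {0..}" "\<forall>k. y k \<in> {0..}"
    using y by (simp_all add: std_simplex_def)
  then have lim_G: "(\<lambda>k. G (y k)) \<longlonglongrightarrow> G y0"
    by (intro continuous_on_tendsto_compose[OF cont y(2)] always_eventually)
  have "max (G y0 $ l) 0 = \<mu>0 * y0 $ l" for l
  proof (rule LIMSEQ_unique)
    show "(\<lambda>k. max (G (y k) $ l) (\<delta> k)) \<longlonglongrightarrow> max (G y0 $ l) 0"
      by (intro tendsto_max tendsto_vec_nth lim_G \<delta>)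
    have "(\<lambda>k. \<mu> k * y k $ l) \<longlonglongrightarrow> \<mu>0 * y0 $ l"
      by (intro tendsto_mult tendsto_vec_nth y(2) \<mu>)
    then show "(\<lambda>k. max (G (y k) $ l) (\<delta> k)) \<longlonglongrightarrow> \<mu>0 * y0 $ l"
      using eig by (simp add: vec_eq_iff)
  qed
  moreover have "0 \<le> G y0"
    using nonneg y(3) by (simp add: std_simplex_def)
  ultimately show ?thesis
    by (simp add: vec_eq_iff less_eq_vec_def)
qed

theorem perron_frobenius_homogeneous:
  fixes G :: "real^'n::finite \<Rightarrow> real^'n"
  assumes nonneg: "\<And>y. 0 \<le> y \<Longrightarrow> 0 \<le> G y"
    and mono: "\<And>y z. 0 \<le> y \<Longrightarrow> y \<le> z \<Longrightarrow> G y \<le> G z"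
    and hom: "\<And>c y. 0 < c \<Longrightarrow> 0 \<le> y \<Longrightarrow> G (c *\<^sub>R y) = c *\<^sub>R G y"
    and cont: "continuous_on {0..} G"
  obtains y \<mu> where "0 \<le> y" "y \<noteq> 0" "0 \<le> \<mu>" "G y = \<mu> *\<^sub>R y"
    "\<And>z \<theta>. 0 \<le> z \<Longrightarrow> z \<noteq> 0 \<Longrightarrow> \<theta> *\<^sub>R z \<le> G z \<Longrightarrow> \<theta> \<le> \<mu>"
proof -
  define \<delta> :: "nat \<Rightarrow> real" where "\<delta> k = inverse (real (Suc k))" for k
  have \<delta>: "0 < \<delta> k" "\<delta> k \<le> 1" for k
    by (simp_all add: \<delta>_def inverse_le_1_iff)
  have "\<exists>y \<mu>. y \<in> std_simplex \<and> 0 < \<mu> \<and> (\<chi> l. max (G y $ l) (\<delta> k)) = \<mu> *\<^sub>R y" for k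
    by (rule perturbed_eigenvector_exists[OF cont \<delta>(1)]) blast
  then obtain y \<mu> where y: "\<And>k. y k \<in> std_simplex" and \<mu>: "\<And>k. 0 < \<mu> k"
    and eig: "\<And>k. (\<chi> l. max (G (y k) $ l) (\<delta> k)) = \<mu> k *\<^sub>R y k"
    by metis
  define B where "B = (\<Sum>l\<in>UNIV. G 1 $ l + 1)"
  have "\<mu> k \<le> B" for k
  proof -
    have "\<mu> k \<le> (\<Sum>l\<in>UNIV. G 1 $ l + \<delta> k)"
      using perturbed_eigenvalue_le[where G=G, OF nonneg mono y[of k] eig[of k]] \<delta>(1)[of k] by simp
    also have "\<dots> \<le> B"
      unfolding B_def using \<delta>(2) by (intro sum_mono) simp
    finally show ?thesis .
  qed
  then have bounded: "\<forall>k. (y k, \<mu> k) \<in> std_simplex \<times> {0..B}"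
    using y \<mu> by (simp add: less_imp_le)
  have "seq_compact (std_simplex \<times> {0..B})"
    by (intro compact_imp_seq_compact compact_Times compact_std_simplex compact_Icc)
  from seq_compactE[OF this bounded]
  obtain p r where p: "p \<in> std_simplex \<times> {0..B}" and r: "strict_mono r"
    and lim: "((\<lambda>k. (y k, \<mu> k)) \<circ> r) \<longlonglongrightarrow> p" .
  obtain y0 \<mu>0 where p_eq: "p = (y0, \<mu>0)"
    by (cases p)
  have y0: "y0 \<in> std_simplex" and "0 \<le> \<mu>0"
    using p by (auto simp: p_eq)
  have lim_\<mu>: "(\<lambda>k. \<mu> (r k)) \<longlonglongrightarrow> \<mu>0"
    using tendsto_snd[OF lim] by (simp add: p_eq o_def)
  have "G y0 = \<mu>0 *\<^sub>R y0"
  proof (rule eigenvector_of_perturbed_limit[OF nonneg cont _ _ y0 lim_\<mu>])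
    show "(\<lambda>k. y (r k)) \<longlonglongrightarrow> y0"
      using tendsto_fst[OF lim] by (simp add: p_eq o_def)
    show "(\<lambda>k. \<delta> (r k)) \<longlonglongrightarrow> 0"
      using LIMSEQ_subseq_LIMSEQ[OF LIMSEQ_inverse_real_of_nat r] by (simp add: \<delta>_def o_def)
  qed (use y eig in auto)
  moreover have "\<theta> \<le> \<mu>0" if "0 \<le> z" "z \<noteq> 0" "\<theta> *\<^sub>R z \<le> G z" for z \<theta>
    using subeigenvalue_le_perturbed_eigenvalue[where G=G, OF mono hom \<delta>(1) \<mu> eig that]
    by (intro LIMSEQ_le_const[OF lim_\<mu>]) auto
  moreover have "0 \<le> y0" "y0 \<noteq> 0"
    using y0 by (auto simp: std_simplex_def)
  ultimately show thesis
    using \<open>0 \<le> \<mu>0\<close> by (intro that) auto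
qed

section \<open>Exponential coordinates\<close>

text \<open>\<open>eexp\<close> maps \<open>(\<real> \<union> {-\<infinity>}, max, +)\<close> isomorphically onto \<open>([0, \<infinity>), max, *)\<close>, with
  inverse \<open>eln\<close>; its value \<open>0\<close> at \<open>\<infinity>\<close> is junk.\<close>

definition eexp :: "ereal \<Rightarrow> real" where
  "eexp x = (case x of ereal r \<Rightarrow> exp r | _ \<Rightarrow> 0)"

definition eln :: "real \<Rightarrow> ereal" where
  "eln t = (if 0 < t then ereal (ln t) else - \<infinity>)"

lemma eexp_ereal [simp]: "eexp (ereal r) = exp r"
  by (simp add: eexp_def)

lemma eexp_MInfty [simp]: "eexp (- \<infinity>) = 0"
  by (simp add: eexp_def)

lemma eexp_nonneg [simp]: "0 \<le> eexp x"
  by (cases x) (auto simp: eexp_def)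

lemma eln_not_PInfty [simp]: "eln t \<noteq> \<infinity>"
  by (simp add: eln_def)

lemma eexp_eln [simp]: "0 \<le> t \<Longrightarrow> eexp (eln t) = t"
  by (auto simp: eln_def)

lemma eln_eexp [simp]: "x \<noteq> \<infinity> \<Longrightarrow> eln (eexp x) = x"
  by (cases x) (auto simp: eln_def)

lemma eexp_pos_iff: "x \<noteq> \<infinity> \<Longrightarrow> 0 < eexp x \<longleftrightarrow> x \<noteq> - \<infinity>"
  by (cases x) auto

lemma eexp_mono: "x \<le> y \<Longrightarrow> y \<noteq> \<infinity> \<Longrightarrow> eexp x \<le> eexp y"
  by (cases x; cases y) auto

lemma eexp_inject: "x \<noteq> \<infinity> \<Longrightarrow> y \<noteq> \<infinity> \<Longrightarrow> eexp x = eexp y \<longleftrightarrow> x = y"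
  by (metis eln_eexp)

lemma eexp_add: "x \<noteq> \<infinity> \<Longrightarrow> y \<noteq> \<infinity> \<Longrightarrow> eexp (x + y) = eexp x * eexp y"
  by (cases x; cases y) (auto simp: exp_add)

lemma eexp_minus_add:
  assumes "a \<noteq> \<infinity>" "a \<noteq> - \<infinity>" "b \<noteq> \<infinity>"
  shows "- a + b \<noteq> \<infinity>" "eexp (- a + b) = eexp b / eexp a"
proof -
  obtain r where a: "a = ereal r"
    using assms by (cases a) auto
  show "- a + b \<noteq> \<infinity>"
    using assms a by (cases b) auto
  show "eexp (- a + b) = eexp b / eexp a"
    using assms a by (cases b) (auto simp: exp_diff)
qed

lemma INF_finite_not_PInfty:
  fixes f :: "'a \<Rightarrow> ereal"
  assumes "finite K" "K \<noteq> {}" "\<And>k. k \<in> K \<Longrightarrow> f k \<noteq> \<infinity>"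
  shows "(INF k\<in>K. f k) \<noteq> \<infinity>"
proof -
  have "Min (f ` K) \<in> f ` K"
    using assms by (intro Min_in) auto
  then obtain k where "k \<in> K" "Min (f ` K) = f k"
    by auto
  then show ?thesis
    using assms by (simp add: Min_Inf)
qed

lemma eexp_INF_finite:
  fixes f :: "'a \<Rightarrow> ereal"
  assumes "finite K" "K \<noteq> {}" "\<And>k. k \<in> K \<Longrightarrow> f k \<noteq> \<infinity>"
  shows "eexp (INF k\<in>K. f k) = (MIN k\<in>K. eexp (f k))"
proof (rule Min_eqI[symmetric])
  show "eexp (INF k\<in>K. f k) \<le> y" if "y \<in> (\<lambda>k. eexp (f k)) ` K" for y
    using that assms by (auto intro!: eexp_mono INF_lower)
  show "eexp (INF k\<in>K. f k) \<in> (\<lambda>k. eexp (f k)) ` K"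
    using Min_in[of "f ` K"] assms by (auto simp: Min_Inf)
qed (use assms in simp)

lemma SUP_finite_not_PInfty:
  fixes f :: "'a \<Rightarrow> ereal"
  assumes "finite K" "\<And>k. k \<in> K \<Longrightarrow> f k \<noteq> \<infinity>"
  shows "(SUP k\<in>K. f k) \<noteq> \<infinity>"
proof (cases "K = {}")
  case False
  then have "Max (f ` K) \<in> f ` K"
    using assms by (intro Max_in) auto
  then obtain k where "k \<in> K" "Max (f ` K) = f k"
    by auto
  then show ?thesis
    using assms False by (simp add: Max_Sup)
qed (simp add: bot_ereal_def)

lemma eexp_SUP_finite:
  fixes f :: "'a \<Rightarrow> ereal"
  assumes "finite K" "\<And>k. k \<in> K \<Longrightarrow> f k \<noteq> \<infinity>"
  shows "eexp (SUP k\<in>K. f k) = Max (insert 0 ((\<lambda>k. eexp (f k)) ` K))"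
proof (cases "K = {}")
  case False
  have "eexp (SUP k\<in>K. f k) = (MAX k\<in>K. eexp (f k))"
  proof (rule Max_eqI[symmetric])
    show "y \<le> eexp (SUP k\<in>K. f k)" if "y \<in> (\<lambda>k. eexp (f k)) ` K" for y
      using that assms SUP_finite_not_PInfty[OF assms] by (auto intro!: eexp_mono SUP_upper)
    show "eexp (SUP k\<in>K. f k) \<in> (\<lambda>k. eexp (f k)) ` K"
      using Max_in[of "f ` K"] False assms by (auto simp: Max_Sup)
  qed (use assms in simp)
  moreover have "0 \<le> (MAX k\<in>K. eexp (f k))"
    using assms False by (auto simp: Max_ge_iff)
  ultimately show ?thesis
    using assms False by simp
qed (simp add: bot_ereal_def)

definition offdiag_max :: "('n::finite \<Rightarrow> ereal) \<Rightarrow> 'n \<Rightarrow> real^'n \<Rightarrow> real" where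
  "offdiag_max v i y = Max (insert 0 ((\<lambda>j. eexp (v j) * y$j) ` {j. j \<noteq> i}))"

lemma offdiag_max_nonneg: "0 \<le> offdiag_max v i y"
  by (simp add: offdiag_max_def)

lemma offdiag_max_mono: "y \<le> z \<Longrightarrow> offdiag_max v i y \<le> offdiag_max v i z"
  unfolding offdiag_max_def
  by (intro Max_insert_0_image_mono mult_left_mono) (auto simp: less_eq_vec_def)

lemma offdiag_max_scaleR: "0 \<le> c \<Longrightarrow> offdiag_max v i (c *\<^sub>R y) = c * offdiag_max v i y"
  using Max_insert_0_image_mult[of "{j. j \<noteq> i}" c "\<lambda>j. eexp (v j) * y$j"]
  by (simp add: offdiag_max_def mult.left_commute)

lemma continuous_on_offdiag_max: "continuous_on UNIV (offdiag_max v i)"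
  unfolding offdiag_max_def[abs_def]
  by (intro continuous_on_Max_insert_0_image continuous_intros) auto

lemma eexp_SUP_offdiag:
  assumes "tvec v" "tvec x"
  shows "(SUP j\<in>{j. j \<noteq> i}. v j + x j) \<noteq> \<infinity>"
    "eexp (SUP j\<in>{j. j \<noteq> i}. v j + x j) = offdiag_max v i (\<chi> j. eexp (x j))"
proof -
  have fin: "v j + x j \<noteq> \<infinity>" for j
    using assms by (simp add: tvec_def)
  then show "(SUP j\<in>{j. j \<noteq> i}. v j + x j) \<noteq> \<infinity>"
    by (intro SUP_finite_not_PInfty) auto
  have "eexp (SUP j\<in>{j. j \<noteq> i}. v j + x j) = Max (insert 0 ((\<lambda>j. eexp (v j + x j)) ` {j. j \<noteq> i}))"
    using fin by (intro eexp_SUP_finite) auto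
  also have "(\<lambda>j. eexp (v j + x j)) = (\<lambda>j. eexp (v j) * eexp (x j))"
    using assms by (simp add: eexp_add tvec_def)
  finally show "eexp (SUP j\<in>{j. j \<noteq> i}. v j + x j) = offdiag_max v i (\<chi> j. eexp (x j))"
    by (simp add: offdiag_max_def)
qed

section \<open>Distance to a tropical hyperplane\<close>

lemma ereal_le_shift: "ereal c + x \<le> y \<Longrightarrow> x \<le> ereal (- c) + y"
  by (cases x; cases y) auto

lemma SUP_le_add_SUP:
  fixes f g :: "'a \<Rightarrow> ereal"
  assumes "\<And>j. j \<in> J \<Longrightarrow> f j \<le> c + g j"
  shows "(SUP j\<in>J. f j) \<le> c + (SUP j\<in>J. g j)"
  using assms by (intro SUP_least order.trans[OF _ add_left_mono[OF SUP_upper]])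

lemma ereal_shift_le_uminus_add_iff:
  assumes "p \<noteq> \<infinity>" "p \<noteq> - \<infinity>" "x \<noteq> \<infinity>"
  shows "ereal (- d) + x \<le> - p + S \<longleftrightarrow> x + p \<le> ereal d + S"
  using assms by (cases x; cases S; cases p) (auto simp: algebra_simps)

lemma le_INF_add_iff:
  fixes f :: "'a \<Rightarrow> ereal"
  assumes "finite K"
  shows "c \<le> (INF k\<in>K. f k) + x \<longleftrightarrow> (\<forall>k\<in>K. c \<le> f k + x)"
proof (cases "K = {}")
  case False
  have "Min (f ` K) \<in> f ` K"
    using assms False by (intro Min_in) auto
  then obtain k0 where k0: "k0 \<in> K" "(INF k\<in>K. f k) = f k0"
    using assms False by (auto simp: Min_Inf)
  have "f k0 + x \<le> f k + x" if "k \<in> K" for k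
    using INF_lower[OF that, of f] k0(2) by (intro add_right_mono) simp
  then show ?thesis
    using k0 by (auto intro: order.trans)
qed (simp add: top_ereal_def)

lemma hilbert_d_le:
  assumes "\<And>l. ereal mu + y l \<le> v l \<and> v l \<le> ereal lam + y l"
  shows "hilbert_d v y \<le> ereal (lam - mu)"
  unfolding hilbert_d_def using assms by (intro Inf_lower) blast

lemma hilbert_d_update_le:
  assumes "tvec v" "v i = ereal \<beta>"
  shows "hilbert_d v (v(i := ereal t)) \<le> ereal \<bar>\<beta> - t\<bar>"
proof -
  have "hilbert_d v (v(i := ereal t)) \<le> ereal (max 0 (\<beta> - t) - min 0 (\<beta> - t))"
  proof (rule hilbert_d_le)
    fix l
    show "ereal (min 0 (\<beta> - t)) + (v(i := ereal t)) l \<le> v l \<and>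
        v l \<le> ereal (max 0 (\<beta> - t)) + (v(i := ereal t)) l"
      using assms by (cases "v l") (auto simp: tvec_def min_def max_def)
  qed
  moreover have "max 0 (\<beta> - t) - min 0 (\<beta> - t) = \<bar>\<beta> - t\<bar>"
    by linarith
  ultimately show ?thesis
    by simp
qed

lemma mem_hyp_iff: "y \<in> hyp i a \<longleftrightarrow> tvec y \<and> a i + y i = (SUP j\<in>{j. j \<noteq> i}. a j + y j)"
  by (simp add: hyp_def setcompr_eq_image)

text \<open>The bridge between the two sides of the theorem: for \<open>d \<ge> 0\<close>, \<open>near_hyp a i v d\<close> says that
  \<open>v\<close> is within Hilbert distance \<open>d\<close> of \<open>H\<^sup>i\<^sub>a\<close>, and for all \<open>v \<in> V\<^sub>i\<close> together it says that
  \<open>-d + a \<le> T\<^sup>t\<^sup>y\<^sup>,\<^sup>i(a)\<close>.\<close>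

definition near_hyp :: "('n::finite \<Rightarrow> ereal) \<Rightarrow> 'n \<Rightarrow> ('n \<Rightarrow> ereal) \<Rightarrow> real \<Rightarrow> bool" where
  "near_hyp a i v d \<longleftrightarrow>
     a i + v i \<le> ereal d + (SUP j\<in>{j. j \<noteq> i}. a j + v j) \<and>
     (SUP j\<in>{j. j \<noteq> i}. a j + v j) \<le> ereal d + (a i + v i)"

lemma near_hyp_of_bounds:
  assumes y: "y \<in> hyp i a" and bounds: "\<And>l. ereal mu + y l \<le> v l \<and> v l \<le> ereal lam + y l"
  shows "near_hyp a i v (lam - mu)"
proof -
  define My where "My = (SUP j\<in>{j. j \<noteq> i}. a j + y j)"
  define Mv where "Mv = (SUP j\<in>{j. j \<noteq> i}. a j + v j)"
  have y_le: "a j + y j \<le> ereal (- mu) + (a j + v j)" for j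
    using add_left_mono[OF ereal_le_shift[OF conjunct1[OF bounds]], of "a j"] by (simp add: ac_simps)
  have v_le: "a j + v j \<le> ereal lam + (a j + y j)" for j
    using add_left_mono[OF conjunct2[OF bounds], of "a j"] by (simp add: ac_simps)
  have shift: "ereal lam + (ereal (- mu) + X) = ereal (lam - mu) + X" for X
    by (simp add: add.assoc[symmetric])
  have "a i + v i \<le> ereal lam + (a i + y i)"
    by (rule v_le)
  also have "\<dots> = ereal lam + My"
    using y by (simp add: mem_hyp_iff My_def)
  also have "\<dots> \<le> ereal lam + (ereal (- mu) + Mv)"
    unfolding My_def Mv_def by (intro add_left_mono SUP_le_add_SUP y_le)
  finally have v_i: "a i + v i \<le> ereal (lam - mu) + Mv"
    by (simp only: shift)
  have "Mv \<le> ereal lam + My"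
    unfolding My_def Mv_def by (intro SUP_le_add_SUP v_le)
  also have "\<dots> = ereal lam + (a i + y i)"
    using y by (simp add: mem_hyp_iff My_def)
  also have "\<dots> \<le> ereal lam + (ereal (- mu) + (a i + v i))"
    by (intro add_left_mono y_le)
  finally have "Mv \<le> ereal (lam - mu) + (a i + v i)"
    by (simp only: shift)
  with v_i show ?thesis
    by (simp add: near_hyp_def Mv_def)
qed

lemma near_hyp_mono:
  assumes "near_hyp a i v d" "d \<le> d'"
  shows "near_hyp a i v d'"
proof -
  have le: "X \<le> ereal d' + Y" if "X \<le> ereal d + Y" for X Y
    using that assms(2) by (cases X; cases Y) auto
  show ?thesis
    using assms(1) unfolding near_hyp_def by (intro conjI le) simp_all
qed

lemma near_hyp_closed:
  assumes "\<And>e. 0 < e \<Longrightarrow> near_hyp a i v (d + e)"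
  shows "near_hyp a i v d"
proof -
  have le: "X \<le> ereal d + Y" if "\<And>e. 0 < e \<Longrightarrow> X \<le> ereal (d + e) + Y" for X Y
  proof (rule ereal_le_epsilon2)
    fix e :: real assume "0 < e"
    then have "X \<le> ereal (d + e) + Y"
      by (rule that)
    also have "\<dots> = ereal d + Y + ereal e"
      by (cases Y) auto
    finally show "X \<le> ereal d + Y + ereal e" .
  qed
  show ?thesis
    unfolding near_hyp_def by (intro conjI le) (use assms in \<open>simp_all add: near_hyp_def\<close>)
qed

lemma near_hyp_if_infdist_le:
  assumes "(INF y\<in>hyp i a. hilbert_d v y) \<le> ereal d"
  shows "near_hyp a i v d"
proof (rule near_hyp_closed)
  fix e :: real assume "0 < e"
  then have "(INF y\<in>hyp i a. hilbert_d v y) < ereal (d + e)"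
    using assms by (simp add: le_less_trans)
  then obtain y where y: "y \<in> hyp i a" "hilbert_d v y < ereal (d + e)"
    by (auto simp: INF_less_iff)
  then obtain lam mu where "lam - mu < d + e"
    and bounds: "\<And>l. ereal mu + y l \<le> v l \<and> v l \<le> ereal lam + y l"
    unfolding hilbert_d_def by (auto simp: Inf_less_iff)
  show "near_hyp a i v (d + e)"
    by (rule near_hyp_mono[OF near_hyp_of_bounds[OF y(1) bounds]]) (use \<open>lam - mu < d + e\<close> in simp)
qed

lemma infdist_hyp_le_if_near_hyp:
  assumes a: "tvec a" and v: "tvec v" and "0 \<le> d" and near: "near_hyp a i v d"
  shows "(INF y\<in>hyp i a. hilbert_d v y) \<le> ereal d"
proof -
  define M where "M = (SUP j\<in>{j. j \<noteq> i}. a j + v j)"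
  have near_M: "a i + v i \<le> ereal d + M" "M \<le> ereal d + (a i + v i)"
    using near by (simp_all add: near_hyp_def M_def)
  obtain y where "y \<in> hyp i a" "hilbert_d v y \<le> ereal d"
  proof (cases "a i + v i = - \<infinity>")
    case True
    moreover have "M = - \<infinity>"
      using near_M(2) unfolding True by simp
    ultimately have "v \<in> hyp i a"
      using v by (simp add: mem_hyp_iff M_def)
    moreover have "hilbert_d v v \<le> ereal d"
      using hilbert_d_le[of 0 v v 0] \<open>0 \<le> d\<close> by (simp add: order_trans)
    ultimately show thesis
      by (rule that)
  next
    case False
    then obtain \<alpha> \<beta> where ab: "a i = ereal \<alpha>" "v i = ereal \<beta>"
      using a v by (cases "a i"; cases "v i") (auto simp: tvec_def)
    then obtain s where s: "M = ereal s"
      using near_M by (cases M) auto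
    define y where "y = v(i := ereal (s - \<alpha>))"
    have "y \<in> hyp i a"
    proof -
      have "(SUP j\<in>{j. j \<noteq> i}. a j + y j) = M"
        unfolding M_def y_def by (intro SUP_cong) auto
      then show ?thesis
        using v ab s by (simp add: mem_hyp_iff y_def tvec_def)
    qed
    moreover have "hilbert_d v y \<le> ereal \<bar>\<beta> - (s - \<alpha>)\<bar>"
      unfolding y_def using v ab(2) by (rule hilbert_d_update_le)
    moreover have "\<bar>\<beta> - (s - \<alpha>)\<bar> \<le> d"
      using near_M ab s by auto
    ultimately show thesis
      by (intro that) (auto intro: order_trans)
  qed
  then show ?thesis
    by (meson INF_lower order_trans)
qed

lemma near_hyp_nonneg:
  assumes "near_hyp a i v d" "a i + v i \<noteq> \<infinity>" "a i + v i \<noteq> - \<infinity>"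
  shows "0 \<le> d"
proof -
  define M where "M = (SUP j\<in>{j. j \<noteq> i}. a j + v j)"
  have "a i + v i \<le> ereal d + M" "M \<le> ereal d + (a i + v i)"
    using assms(1) by (simp_all add: near_hyp_def M_def)
  with assms(2,3) show ?thesis
    by (cases "a i + v i"; cases M) auto
qed

section \<open>The operator \<open>T\<^sup>t\<^sup>y\<close>\<close>

lemma spec_rad_eqI:
  assumes "tvec u" "u \<noteq> allneg" "\<rho> \<noteq> \<infinity>" "T u = (\<lambda>l. \<rho> + u l)"
    and dominates: "\<And>a r. tvec a \<Longrightarrow> a \<noteq> allneg \<Longrightarrow> T a = (\<lambda>l. ereal r + a l) \<Longrightarrow> ereal r \<le> \<rho>"
  shows "spec_rad T = \<rho>"
  unfolding spec_rad_def
proof (rule antisym)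
  show "\<rho> \<le> Sup {lam. lam \<noteq> \<infinity> \<and> (\<exists>u. tvec u \<and> u \<noteq> allneg \<and> T u = (\<lambda>l. lam + u l))}"
    using assms by (intro Sup_upper) blast
  show "Sup {lam. lam \<noteq> \<infinity> \<and> (\<exists>u. tvec u \<and> u \<noteq> allneg \<and> T u = (\<lambda>l. lam + u l))} \<le> \<rho>"
  proof (rule Sup_least, clarify)
    fix lam a assume "lam \<noteq> \<infinity>" "tvec a" "a \<noteq> allneg" "T a = (\<lambda>l. lam + a l)"
    then show "lam \<le> \<rho>"
      using dominates by (cases lam) auto
  qed
qed

locale tropical_family =
  fixes V :: "'n::finite \<Rightarrow> ('n \<Rightarrow> ereal) set"
  assumes finite_points: "finite (\<Union>i. V i)"
    and tvec_points: "\<And>i v. v \<in> V i \<Longrightarrow> tvec v"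
    and cover: "\<And>l. \<exists>i. \<exists>v\<in>V i. v l \<noteq> - \<infinity>"
begin

lemma finite_V: "finite (V i)"
  using finite_points by (rule finite_subset[rotated]) auto

lemma point_not_PInfty: "v \<in> V i \<Longrightarrow> v j \<noteq> \<infinity>"
  using tvec_points by (auto simp: tvec_def)

definition Vfin :: "'n \<Rightarrow> 'n \<Rightarrow> ('n \<Rightarrow> ereal) set" where
  "Vfin i l = {v \<in> V i. v l \<noteq> - \<infinity>}"

definition Ifin :: "'n \<Rightarrow> 'n set" where
  "Ifin l = {i. Vfin i l \<noteq> {}}"

lemma Vfin_nonempty: "i \<in> Ifin l \<Longrightarrow> Vfin i l \<noteq> {}"
  by (simp add: Ifin_def)

lemma finite_Vfin: "finite (Vfin i l)"
  using finite_V by (simp add: Vfin_def)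

lemma Ifin_nonempty: "Ifin l \<noteq> {}"
  using cover[of l] by (auto simp: Ifin_def Vfin_def)

text \<open>The term contributed by \<open>v \<in> V\<^sub>i\<close> to \<open>T\<^sup>t\<^sup>y\<^sup>,\<^sup>i\<^sub>l\<close>, read in the coordinates \<open>y = exp x\<close>.\<close>

definition expT_term :: "'n \<Rightarrow> 'n \<Rightarrow> ('n \<Rightarrow> ereal) \<Rightarrow> real^'n \<Rightarrow> real" where
  "expT_term i l v y =
    (if l = i then offdiag_max v i y / eexp (v i) else eexp (v i) / eexp (v l) * y$i)"

definition expT_i :: "'n \<Rightarrow> 'n \<Rightarrow> real^'n \<Rightarrow> real" where
  "expT_i i l y = (MIN v\<in>Vfin i l. expT_term i l v y)"

definition expT :: "real^'n \<Rightarrow> real^'n" where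
  "expT y = (\<chi> l. MIN i\<in>Ifin l. expT_i i l y)"

lemma Tty_i_outside_Ifin:
  assumes "i \<notin> Ifin l"
  shows "Tty_i V i x l = \<infinity>"
proof -
  have "Vfin i l = {}"
    using assms by (simp add: Ifin_def)
  then show ?thesis
    by (cases "l = i") (simp_all add: Tty_i_def setcompr_eq_image top_ereal_def flip: Vfin_def)
qed

lemma eexp_Tty_i:
  assumes x: "tvec x" and i: "i \<in> Ifin l"
  shows "Tty_i V i x l \<noteq> \<infinity>" "eexp (Tty_i V i x l) = expT_i i l (\<chi> j. eexp (x j))"
proof -
  have x_fin: "x j \<noteq> \<infinity>" for j
    using x by (simp add: tvec_def)
  have Vfin: "finite (Vfin i l)" "Vfin i l \<noteq> {}"
    using finite_Vfin Vfin_nonempty[OF i] by auto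
  have "Tty_i V i x l \<noteq> \<infinity> \<and> eexp (Tty_i V i x l) = expT_i i l (\<chi> j. eexp (x j))"
  proof (cases "l = i")
    case True
    define S where "S v = (SUP j\<in>{j. j \<noteq> i}. v j + x j)" for v
    have T: "Tty_i V i x l = (INF v\<in>Vfin i l. - v i + S v)"
      by (simp add: Tty_i_def True S_def Vfin_def setcompr_eq_image)
    have summand: "- v i + S v \<noteq> \<infinity>" "eexp (- v i + S v) = expT_term i l v (\<chi> j. eexp (x j))"
      if "v \<in> Vfin i l" for v
    proof -
      have v: "v \<in> V i" "v i \<noteq> - \<infinity>"
        using that True by (auto simp: Vfin_def)
      note S = eexp_SUP_offdiag[OF tvec_points[OF v(1)] x, of i, folded S_def]
      show "- v i + S v \<noteq> \<infinity>" "eexp (- v i + S v) = expT_term i l v (\<chi> j. eexp (x j))"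
        using eexp_minus_add[OF point_not_PInfty[OF v(1)] v(2) S(1)] S(2) True
        by (simp_all add: expT_term_def)
    qed
    have "eexp (Tty_i V i x l) = (MIN v\<in>Vfin i l. eexp (- v i + S v))"
      unfolding T using Vfin summand(1) by (rule eexp_INF_finite)
    then show ?thesis
      unfolding T using INF_finite_not_PInfty[OF Vfin summand(1)] summand(2)
      by (simp add: expT_i_def cong: image_cong)
  next
    case False
    have T: "Tty_i V i x l = (INF v\<in>Vfin i l. - v l + v i) + x i"
      using False by (simp add: Tty_i_def Vfin_def setcompr_eq_image)
    have summand: "- v l + v i \<noteq> \<infinity>" "eexp (- v l + v i) = eexp (v i) / eexp (v l)"
      if "v \<in> Vfin i l" for v
      using that eexp_minus_add[of "v l" "v i"] point_not_PInfty by (auto simp: Vfin_def)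
    have Inf: "(INF v\<in>Vfin i l. - v l + v i) \<noteq> \<infinity>"
      using Vfin summand(1) by (rule INF_finite_not_PInfty)
    have "eexp (Tty_i V i x l) = eexp (INF v\<in>Vfin i l. - v l + v i) * eexp (x i)"
      unfolding T using Inf x_fin by (rule eexp_add)
    also have "eexp (INF v\<in>Vfin i l. - v l + v i) = (MIN v\<in>Vfin i l. eexp (v i) / eexp (v l))"
      using eexp_INF_finite[OF Vfin summand(1)] summand(2) by (simp cong: image_cong)
    also have "\<dots> * eexp (x i) = expT_i i l (\<chi> j. eexp (x j))"
      using Min_image_mult[OF Vfin eexp_nonneg[of "x i"], of "\<lambda>v. eexp (v i) / eexp (v l)"] False
      by (simp add: expT_i_def expT_term_def mult.commute)
    finally show ?thesis
      unfolding T using Inf x_fin by simp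
  qed
  then show "Tty_i V i x l \<noteq> \<infinity>" "eexp (Tty_i V i x l) = expT_i i l (\<chi> j. eexp (x j))"
    by simp_all
qed

lemma Tty_eq_INF_Ifin: "Tty V x l = (INF i\<in>Ifin l. Tty_i V i x l)"
proof -
  have "Tty V x l = inf (INF i\<in>Ifin l. Tty_i V i x l) (INF i\<in>- Ifin l. Tty_i V i x l)"
    unfolding Tty_def INF_union[symmetric] by simp
  also have "(INF i\<in>- Ifin l. Tty_i V i x l) = \<infinity>"
    by (simp add: Tty_i_outside_Ifin INF_top_conv flip: top_ereal_def)
  finally show ?thesis
    by (simp add: top_ereal_def[symmetric])
qed

lemma eexp_Tty:
  assumes x: "tvec x"
  shows "Tty V x l \<noteq> \<infinity>" "eexp (Tty V x l) = expT (\<chi> j. eexp (x j)) $ l"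
proof -
  have "finite (Ifin l)" "Ifin l \<noteq> {}"
    by (simp_all add: Ifin_nonempty)
  note INF = this eexp_Tty_i(1)[OF x]
  show "Tty V x l \<noteq> \<infinity>"
    unfolding Tty_eq_INF_Ifin using INF by (rule INF_finite_not_PInfty)
  have "eexp (Tty V x l) = (MIN i\<in>Ifin l. eexp (Tty_i V i x l))"
    unfolding Tty_eq_INF_Ifin using INF by (rule eexp_INF_finite)
  then show "eexp (Tty V x l) = expT (\<chi> j. eexp (x j)) $ l"
    using eexp_Tty_i(2)[OF x] by (simp add: expT_def cong: image_cong)
qed

lemma eexp_point_pos: "v \<in> Vfin i l \<Longrightarrow> 0 < eexp (v l)"
  using eexp_pos_iff point_not_PInfty by (auto simp: Vfin_def)

lemma expT_term_nonneg: "0 \<le> y \<Longrightarrow> 0 \<le> expT_term i l v y"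
  by (simp add: expT_term_def offdiag_max_nonneg less_eq_vec_def)

lemma expT_term_mono:
  assumes "y \<le> z"
  shows "expT_term i l v y \<le> expT_term i l v z"
  using assms offdiag_max_mono[OF assms]
  by (auto simp: expT_term_def less_eq_vec_def intro!: divide_right_mono mult_left_mono)

lemma expT_term_scaleR: "0 < c \<Longrightarrow> expT_term i l v (c *\<^sub>R y) = c * expT_term i l v y"
  by (simp add: expT_term_def offdiag_max_scaleR)

lemma continuous_on_expT_term:
  assumes "v \<in> Vfin i l"
  shows "continuous_on UNIV (expT_term i l v)"
proof (cases "l = i")
  case True
  then have "eexp (v i) \<noteq> 0"
    using eexp_point_pos[OF assms] by simp
  then have "continuous_on UNIV (\<lambda>y. offdiag_max v i y / eexp (v i))"
    by (intro continuous_intros continuous_on_offdiag_max) simp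
  then show ?thesis
    using True by (simp add: expT_term_def[abs_def])
qed (use eexp_point_pos[OF assms] in \<open>auto simp: expT_term_def[abs_def] intro!: continuous_intros\<close>)

lemma expT_nonneg: "0 \<le> y \<Longrightarrow> 0 \<le> expT y"
  using Ifin_nonempty Vfin_nonempty finite_Vfin expT_term_nonneg
  by (simp add: expT_def expT_i_def less_eq_vec_def Min_ge_iff)

lemma expT_mono:
  assumes "0 \<le> y" "y \<le> z"
  shows "expT y \<le> expT z"
  unfolding less_eq_vec_def expT_def expT_i_def vec_lambda_beta
  using Ifin_nonempty Vfin_nonempty finite_Vfin expT_term_mono[OF assms(2)]
  by (intro allI Min_image_mono) auto

lemma expT_scaleR:
  assumes "0 < c"
  shows "expT (c *\<^sub>R y) = c *\<^sub>R expT y"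
proof -
  have "expT_i i l (c *\<^sub>R y) = c * expT_i i l y" if "i \<in> Ifin l" for i l
    using Vfin_nonempty[OF that] finite_Vfin assms Min_image_mult[of "Vfin i l" c]
    by (simp add: expT_i_def expT_term_scaleR)
  then show ?thesis
    using Ifin_nonempty assms Min_image_mult[of "Ifin l" c for l]
    by (simp add: expT_def vec_eq_iff)
qed

lemma continuous_on_expT: "continuous_on UNIV expT"
  unfolding expT_def[abs_def] expT_i_def using Ifin_nonempty Vfin_nonempty finite_Vfin
  by (intro continuous_on_vec_lambda continuous_on_Min_image continuous_on_expT_term) auto

lemma Tty_eln_eigenvector:
  assumes y: "0 \<le> y" and "0 \<le> \<mu>" and eig: "expT y = \<mu> *\<^sub>R y"
  shows "Tty V (\<lambda>j. eln (y$j)) = (\<lambda>l. eln \<mu> + eln (y$l))"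
proof -
  define u where "u = (\<lambda>j. eln (y$j))"
  have "tvec u"
    by (simp add: tvec_def u_def)
  have y_eq: "(\<chi> j. eexp (u j)) = y"
    using y by (simp add: vec_eq_iff u_def less_eq_vec_def)
  have "Tty V u l = eln \<mu> + u l" for l
  proof -
    have "eexp (Tty V u l) = \<mu> * y$l"
      using eexp_Tty(2)[OF \<open>tvec u\<close>] eig by (simp add: y_eq)
    also have "\<dots> = eexp (eln \<mu> + u l)"
      using \<open>0 \<le> \<mu>\<close> y by (simp add: eexp_add u_def less_eq_vec_def)
    finally show ?thesis
      using eexp_Tty(1)[OF \<open>tvec u\<close>] by (simp add: eexp_inject u_def)
  qed
  then show ?thesis
    by (auto simp: u_def)
qed

lemma expT_eexp_subeigenvector:
  assumes a: "tvec a" "a \<noteq> allneg" and sub: "\<forall>l. ereal r + a l \<le> Tty V a l"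
  shows "(\<chi> j. eexp (a j)) \<noteq> 0" "exp r *\<^sub>R (\<chi> j. eexp (a j)) \<le> expT (\<chi> j. eexp (a j))"
proof -
  obtain j where "a j \<noteq> - \<infinity>"
    using a(2) by (auto simp: allneg_def)
  then have "0 < (\<chi> j. eexp (a j)) $ j"
    using a(1) by (simp add: tvec_def eexp_pos_iff)
  then show "(\<chi> j. eexp (a j)) \<noteq> 0"
    by (metis less_irrefl zero_index)
  have "exp r * (\<chi> j. eexp (a j)) $ l \<le> expT (\<chi> j. eexp (a j)) $ l" for l
  proof -
    have "exp r * (\<chi> j. eexp (a j)) $ l = eexp (ereal r + a l)"
      using a(1) by (simp add: eexp_add tvec_def)
    also have "\<dots> \<le> eexp (Tty V a l)"
      using sub eexp_Tty(1)[OF a(1)] by (simp add: eexp_mono)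
    finally show ?thesis
      using eexp_Tty(2)[OF a(1)] by simp
  qed
  then show "exp r *\<^sub>R (\<chi> j. eexp (a j)) \<le> expT (\<chi> j. eexp (a j))"
    by (simp add: less_eq_vec_def)
qed

lemma Tty_eigenpair:
  obtains u \<rho> where "tvec u" "u \<noteq> allneg" "\<rho> \<noteq> \<infinity>" "Tty V u = (\<lambda>l. \<rho> + u l)"
    "\<And>a r. tvec a \<Longrightarrow> a \<noteq> allneg \<Longrightarrow> \<forall>l. ereal r + a l \<le> Tty V a l \<Longrightarrow> ereal r \<le> \<rho>"
proof -
  obtain y \<mu> where y: "0 \<le> y" "y \<noteq> 0" and "0 \<le> \<mu>" and eig: "expT y = \<mu> *\<^sub>R y"
    and bound: "\<And>z \<theta>. 0 \<le> z \<Longrightarrow> z \<noteq> 0 \<Longrightarrow> \<theta> *\<^sub>R z \<le> expT z \<Longrightarrow> \<theta> \<le> \<mu>"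
    using perron_frobenius_homogeneous[of expT] expT_nonneg expT_mono expT_scaleR
      continuous_on_subset[OF continuous_on_expT] by blast
  have "ereal r \<le> eln \<mu>"
    if "tvec a" "a \<noteq> allneg" "\<forall>l. ereal r + a l \<le> Tty V a l" for a r
  proof -
    have "0 \<le> (\<chi> j. eexp (a j))"
      by (simp add: less_eq_vec_def)
    then have "exp r \<le> \<mu>"
      using bound expT_eexp_subeigenvector[OF that] by blast
    then show ?thesis
      by (auto simp: eln_def ln_ge_iff intro: less_le_trans[OF exp_gt_zero])
  qed
  moreover have "(\<lambda>j. eln (y$j)) \<noteq> allneg"
    using y by (auto simp: allneg_def eln_def vec_eq_iff fun_eq_iff less_eq_vec_def less_le)
  ultimately show thesis
    using Tty_eln_eigenvector[OF y(1) \<open>0 \<le> \<mu>\<close> eig] by (intro that) (auto simp: tvec_def)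
qed

lemma
  shows spec_rad_Tty_not_PInfty: "spec_rad (Tty V) \<noteq> \<infinity>"
    and spec_rad_Tty_eigenvector:
      "\<exists>u. tvec u \<and> u \<noteq> allneg \<and> Tty V u = (\<lambda>l. spec_rad (Tty V) + u l)"
    and subeigenvalue_le_spec_rad_Tty:
      "\<And>a r. tvec a \<Longrightarrow> a \<noteq> allneg \<Longrightarrow> \<forall>l. ereal r + a l \<le> Tty V a l \<Longrightarrow> ereal r \<le> spec_rad (Tty V)"
proof -
  obtain u \<rho> where u: "tvec u" "u \<noteq> allneg" "\<rho> \<noteq> \<infinity>" "Tty V u = (\<lambda>l. \<rho> + u l)"
    and sub: "\<And>a r. tvec a \<Longrightarrow> a \<noteq> allneg \<Longrightarrow> \<forall>l. ereal r + a l \<le> Tty V a l \<Longrightarrow> ereal r \<le> \<rho>"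
    by (rule Tty_eigenpair) blast
  have "spec_rad (Tty V) = \<rho>"
    using u sub by (intro spec_rad_eqI) auto
  with u sub show "spec_rad (Tty V) \<noteq> \<infinity>"
    "\<exists>u. tvec u \<and> u \<noteq> allneg \<and> Tty V u = (\<lambda>l. spec_rad (Tty V) + u l)"
    "\<And>a r. tvec a \<Longrightarrow> a \<noteq> allneg \<Longrightarrow> \<forall>l. ereal r + a l \<le> Tty V a l \<Longrightarrow> ereal r \<le> spec_rad (Tty V)"
    by auto
qed

lemma subeigen_Tty_i_diag_iff:
  assumes a: "tvec a"
  shows "ereal (- d) + a i \<le> Tty_i V i a i \<longleftrightarrow>
    (\<forall>v\<in>V i. a i + v i \<le> ereal d + (SUP j\<in>{j. j \<noteq> i}. a j + v j))"
proof -
  have a_fin: "a j \<noteq> \<infinity>" for j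
    using a by (simp add: tvec_def)
  have "ereal (- d) + a i \<le> - v i + (SUP j\<in>{j. j \<noteq> i}. v j + a j) \<longleftrightarrow>
      a i + v i \<le> ereal d + (SUP j\<in>{j. j \<noteq> i}. a j + v j)" if "v \<in> Vfin i i" for v
  proof -
    have v: "v \<in> V i" "v i \<noteq> - \<infinity>"
      using that by (auto simp: Vfin_def)
    have "(SUP j\<in>{j. j \<noteq> i}. v j + a j) = (SUP j\<in>{j. j \<noteq> i}. a j + v j)"
      by (simp add: add.commute)
    then show ?thesis
      using ereal_shift_le_uminus_add_iff[OF point_not_PInfty[OF v(1)] v(2) a_fin[of i]] by simp
  qed
  moreover have "a i + v i \<le> ereal d + (SUP j\<in>{j. j \<noteq> i}. a j + v j)"
    if "v \<in> V i" "v \<notin> Vfin i i" for v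
    using that a_fin[of i] by (cases "a i") (auto simp: Vfin_def)
  ultimately show ?thesis
    by (auto simp: Tty_i_def Vfin_def setcompr_eq_image le_INF_iff)
qed

lemma subeigen_Tty_i_offdiag_iff:
  assumes a: "tvec a" and "l \<noteq> i"
  shows "ereal (- d) + a l \<le> Tty_i V i a l \<longleftrightarrow> (\<forall>v\<in>V i. a l + v l \<le> ereal d + (a i + v i))"
proof -
  have a_fin: "a j \<noteq> \<infinity>" for j
    using a by (simp add: tvec_def)
  have "ereal (- d) + a l \<le> - v l + v i + a i \<longleftrightarrow> a l + v l \<le> ereal d + (a i + v i)"
    if "v \<in> Vfin i l" for v
  proof -
    have v: "v \<in> V i" "v l \<noteq> - \<infinity>"
      using that by (auto simp: Vfin_def)
    have "- v l + v i + a i = - v l + (a i + v i)"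
      by (simp add: ac_simps)
    then show ?thesis
      using ereal_shift_le_uminus_add_iff[OF point_not_PInfty[OF v(1)] v(2) a_fin[of l]] by simp
  qed
  moreover have "a l + v l \<le> ereal d + (a i + v i)" if "v \<in> V i" "v \<notin> Vfin i l" for v
    using that a_fin[of l] by (cases "a l") (auto simp: Vfin_def)
  moreover have "Vfin i l \<subseteq> V i"
    by (auto simp: Vfin_def)
  ultimately show ?thesis
    using \<open>l \<noteq> i\<close> finite_Vfin[of i l]
    by (auto simp: Tty_i_def setcompr_eq_image le_INF_add_iff simp flip: Vfin_def)
qed

lemma subeigen_Tty_i_iff:
  assumes a: "tvec a"
  shows "(\<forall>l. ereal (- d) + a l \<le> Tty_i V i a l) \<longleftrightarrow> (\<forall>v\<in>V i. near_hyp a i v d)"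
proof -
  have "(\<forall>l. ereal (- d) + a l \<le> Tty_i V i a l) \<longleftrightarrow>
      ereal (- d) + a i \<le> Tty_i V i a i \<and> (\<forall>l. l \<noteq> i \<longrightarrow> ereal (- d) + a l \<le> Tty_i V i a l)"
    by auto
  also have "\<dots> \<longleftrightarrow> (\<forall>v\<in>V i. a i + v i \<le> ereal d + (SUP j\<in>{j. j \<noteq> i}. a j + v j)) \<and>
      (\<forall>l. l \<noteq> i \<longrightarrow> (\<forall>v\<in>V i. a l + v l \<le> ereal d + (a i + v i)))"
    using subeigen_Tty_i_diag_iff[OF a] subeigen_Tty_i_offdiag_iff[OF a] by simp
  also have "\<dots> \<longleftrightarrow> (\<forall>v\<in>V i. near_hyp a i v d)"
    by (auto simp: near_hyp_def SUP_le_iff)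
  finally show ?thesis .
qed

lemma subeigen_Tty_iff:
  assumes "tvec a"
  shows "(\<forall>l. ereal (- d) + a l \<le> Tty V a l) \<longleftrightarrow> (\<forall>i. \<forall>v\<in>V i. near_hyp a i v d)"
  using subeigen_Tty_i_iff[OF assms] by (auto simp: Tty_def le_INF_iff)

lemma near_hyp_all_nonneg:
  assumes a: "tvec a" "a \<noteq> allneg" and near: "\<And>i v. v \<in> V i \<Longrightarrow> near_hyp a i v d"
  shows "0 \<le> d"
proof -
  obtain l where l: "a l \<noteq> - \<infinity>"
    using a(2) by (auto simp: allneg_def)
  obtain i v where v: "v \<in> V i" "v l \<noteq> - \<infinity>"
    using cover by blast
  have fin: "a j + v j \<noteq> \<infinity>" for j
    using a(1) point_not_PInfty[OF v(1)] by (simp add: tvec_def)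
  have finite_l: "a l + v l \<noteq> - \<infinity>"
    using l v(2) fin[of l] by (cases "a l"; cases "v l") auto
  have le: "a l + v l \<le> ereal d + (a i + v i)" if "l \<noteq> i"
  proof -
    have "a l + v l \<le> (SUP j\<in>{j. j \<noteq> i}. a j + v j)"
      using that by (intro SUP_upper) simp
    also have "\<dots> \<le> ereal d + (a i + v i)"
      using near[OF v(1)] by (simp add: near_hyp_def)
    finally show ?thesis .
  qed
  have "a i + v i \<noteq> - \<infinity>"
  proof
    assume eq: "a i + v i = - \<infinity>"
    then have "l \<noteq> i"
      using finite_l by auto
    then show False
      using le eq finite_l by simp
  qed
  then show ?thesis
    by (rule near_hyp_nonneg[OF near[OF v(1)] fin])
qed

lemma max_distH_le_iff:
  assumes a: "tvec a" "a \<noteq> allneg"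
  shows "(SUP i. distH (V i) (hyp i a)) \<le> ereal d \<longleftrightarrow> (\<forall>l. ereal (- d) + a l \<le> Tty V a l)"
proof -
  have "(SUP i. distH (V i) (hyp i a)) \<le> ereal d \<longleftrightarrow>
      (\<forall>i. \<forall>v\<in>V i. (INF y\<in>hyp i a. hilbert_d v y) \<le> ereal d)"
    by (simp add: distH_def SUP_le_iff)
  also have "\<dots> \<longleftrightarrow> (\<forall>i. \<forall>v\<in>V i. near_hyp a i v d)"
  proof (intro iffI allI ballI)
    fix i v assume "\<forall>i. \<forall>v\<in>V i. (INF y\<in>hyp i a. hilbert_d v y) \<le> ereal d" "v \<in> V i"
    then show "near_hyp a i v d"
      by (blast intro: near_hyp_if_infdist_le)
  next
    fix i v assume near: "\<forall>i. \<forall>v\<in>V i. near_hyp a i v d" and v: "v \<in> V i"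
    have "0 \<le> d"
      using near by (intro near_hyp_all_nonneg[OF a]) blast
    with near v show "(INF y\<in>hyp i a. hilbert_d v y) \<le> ereal d"
      by (intro infdist_hyp_le_if_near_hyp[OF a(1) tvec_points[OF v]]) auto
  qed
  also have "\<dots> \<longleftrightarrow> (\<forall>l. ereal (- d) + a l \<le> Tty V a l)"
    using subeigen_Tty_iff[OF a(1)] by simp
  finally show ?thesis .
qed

lemma neg_spec_rad_le_max_distH:
  assumes a: "tvec a" "a \<noteq> allneg"
  shows "- spec_rad (Tty V) \<le> (SUP i. distH (V i) (hyp i a))"
proof (rule ereal_le_real)
  fix d assume "(SUP i. distH (V i) (hyp i a)) \<le> ereal d"
  then have "ereal (- d) \<le> spec_rad (Tty V)"
    using max_distH_le_iff[OF a] subeigenvalue_le_spec_rad_Tty[OF a] by blast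
  then show "- spec_rad (Tty V) \<le> ereal d"
    by (simp add: ereal_uminus_le_reorder)
qed

lemma max_distH_at_subeigenvector:
  assumes a: "tvec a" "a \<noteq> allneg" and sub: "\<forall>l. spec_rad (Tty V) + a l \<le> Tty V a l"
  shows "(SUP i. distH (V i) (hyp i a)) = - spec_rad (Tty V)"
proof (cases "spec_rad (Tty V)")
  case (real r)
  then have "(SUP i. distH (V i) (hyp i a)) \<le> ereal (- r)"
    using max_distH_le_iff[OF a, of "- r"] sub by simp
  then show ?thesis
    using neg_spec_rad_le_max_distH[OF a] real by simp
next
  case PInf
  then show ?thesis
    using spec_rad_Tty_not_PInfty by simp
qed (use neg_spec_rad_le_max_distH[OF a] in simp)

end

theorem theorem5p10:
  fixes V :: "'n::finite \<Rightarrow> ('n \<Rightarrow> ereal) set"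
  assumes fin: "finite (\<Union>i. V i)"
    and vecs: "\<And>i v. v \<in> V i \<Longrightarrow> tvec v \<and> v \<noteq> allneg"
    and cover: "\<And>l. \<exists>i. \<exists>v\<in>V i. v l \<noteq> - \<infinity>"
    and nonempty: "\<And>i. V i \<noteq> {}"
    and disjoint: "\<And>i j. i \<noteq> j \<Longrightarrow> V i \<inter> V j = {}"
  shows "(\<forall>a. tvec a \<and> a \<noteq> allneg \<longrightarrow>
            - spec_rad (Tty V) \<le> (SUP i. distH (V i) (hyp i a)))
       \<and> (\<exists>a. tvec a \<and> a \<noteq> allneg \<and>
            (SUP i. distH (V i) (hyp i a)) = - spec_rad (Tty V))
       \<and> (\<forall>a. tvec a \<and> a \<noteq> allneg \<and> (\<forall>l. spec_rad (Tty V) + a l \<le> Tty V a l) \<longrightarrow>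
            (SUP i. distH (V i) (hyp i a)) = - spec_rad (Tty V))"
proof -
  interpret tropical_family V
    using fin vecs cover by unfold_locales auto
  obtain u where u: "tvec u" "u \<noteq> allneg" "Tty V u = (\<lambda>l. spec_rad (Tty V) + u l)"
    using spec_rad_Tty_eigenvector by blast
  then have "(SUP i. distH (V i) (hyp i u)) = - spec_rad (Tty V)"
    by (intro max_distH_at_subeigenvector) auto
  with u show ?thesis
    using neg_spec_rad_le_max_distH max_distH_at_subeigenvector by blast
qed

end
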